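(* Let $G$ be a $(\Delta+1)$-graph and let $H$ be a graph such that $\Delta(G)+1\ge |V(H)|-1-\Delta(H)$. Then $\chi_i(G\,\square\,H)\le \Delta(G\,\square\,H)+2$.
   Context: All graphs are finite and simple. An incidence of a graph $G$ is a pair $(v,e)$ with $v\in V(G)$, $e\in E(G)$ and $v\in e$. Two incidences $(v,e)$ and $(u,f)$ are adjacent if $v=u$, or $e=f$, or $vu\in\{e,f\}$. An incidence coloring of $G$ assigns colors to all incidences so that adjacent incidences receive distinct colors. $\chi_i(G)$ is the least number of colors in an incidence coloring of $G$. $\Delta(G)$ denotes the maximum degree. For a positive integer $k$, $G$ is a $(\Delta+k)$-graph if it admits an incidence coloring with at most $\Delta(G)+k$ colors. $G\,\square\,H$ denotes the Cartesian product: vertex set $V(G)\times V(H)$, with $(u,v)\sim(u',v')$ iff ($uu'\in E(G)$ and $v=v'$) or ($u=u'$ and $vv'\in E(H)$). *)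

theory Defs
  imports Main
begin

type_synonym 'a graph = "'a set \<times> 'a set set"

definition verts :: "'a graph \<Rightarrow> 'a set" where "verts G = fst G"
definition edges :: "'a graph \<Rightarrow> 'a set set" where "edges G = snd G"

definition simple_graph :: "'a graph \<Rightarrow> bool" where
  "simple_graph G \<longleftrightarrow> finite (verts G) \<and>
     (\<forall>e\<in>edges G. e \<subseteq> verts G \<and> card e = 2)"

definition degree :: "'a graph \<Rightarrow> 'a \<Rightarrow> nat" where
  "degree G v = card {e \<in> edges G. v \<in> e}"

text \<open>Maximum degree (0 for the graph without vertices).\<close>
definition max_degree :: "'a graph \<Rightarrow> nat" where
  "max_degree G = Max (insert 0 (degree G ` verts G))"

definition incidences :: "'a graph \<Rightarrow> ('a \<times> 'a set) set" where
  "incidences G = {(v, e). v \<in> verts G \<and> e \<in> edges G \<and> v \<in> e}"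

definition adjacent_inc :: "'a \<times> 'a set \<Rightarrow> 'a \<times> 'a set \<Rightarrow> bool" where
  "adjacent_inc i j \<longleftrightarrow> (case i of (v, e) \<Rightarrow> case j of (u, f) \<Rightarrow>
      v = u \<or> e = f \<or> {v, u} \<in> {e, f})"

definition incidence_coloring :: "'a graph \<Rightarrow> nat \<Rightarrow> ('a \<times> 'a set \<Rightarrow> nat) \<Rightarrow> bool" where
  "incidence_coloring G k c \<longleftrightarrow>
     (\<forall>i\<in>incidences G. c i < k) \<and>
     (\<forall>i\<in>incidences G. \<forall>j\<in>incidences G. i \<noteq> j \<and> adjacent_inc i j \<longrightarrow> c i \<noteq> c j)"

definition incidence_chromatic_number :: "'a graph \<Rightarrow> nat" where
  "incidence_chromatic_number G = (LEAST k. \<exists>c. incidence_coloring G k c)"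

definition delta_plus_graph :: "nat \<Rightarrow> 'a graph \<Rightarrow> bool" where
  "delta_plus_graph k G \<longleftrightarrow> (\<exists>c. incidence_coloring G (max_degree G + k) c)"

definition cart_prod :: "'a graph \<Rightarrow> 'b graph \<Rightarrow> ('a \<times> 'b) graph" where
  "cart_prod G H =
     (verts G \<times> verts H,
      {{(u, v), (u', v)} | u u' v. {u, u'} \<in> edges G \<and> v \<in> verts H} \<union>
      {{(u, v), (u, v')} | u v v'. u \<in> verts G \<and> {v, v'} \<in> edges H})"

end

theory Submission imports Defs begin

text \<open>Colour an incidence of \<open>G \<box> H\<close> lying in a copy \<open>G \<times> {v}\<close> by a colour of the
  corresponding incidence of \<open>G\<close>, relabelled through an injection \<open>g v\<close>, and an incidence
  \<open>((u,v), (u,v)(u,v'))\<close> lying in a copy \<open>{u} \<times> H\<close> by a label \<open>l v'\<close> of the far endpoint,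
  where \<open>l\<close> numbers the vertices of \<open>H\<close> injectively. Incidences at \<open>(u,v)\<close> in the
  \<open>H\<close>-direction then get pairwise distinct labels, and they clash with the \<open>G\<close>-direction
  ones only on the labels of \<open>v\<close> and its neighbours, which \<open>g v\<close> avoids. With
  \<open>\<Delta>(G)+1\<close> colours on \<open>G\<close> this needs \<open>\<Delta>(G)+\<Delta>(H)+2\<close> labels in total, enough to
  number \<open>H\<close> by the hypothesis, and \<open>\<Delta>(G)+\<Delta>(H) \<le> \<Delta>(G \<box> H)\<close>.\<close>

definition neighbours :: "'a graph \<Rightarrow> 'a \<Rightarrow> 'a set" where
  "neighbours G v = {w. {v, w} \<in> edges G}"

lemma simple_graph_finite_edges: "simple_graph G \<Longrightarrow> finite (edges G)"
  unfolding simple_graph_def by (meson PowI finite_Pow_iff finite_subset subsetI)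

lemma simple_graph_edgeE:
  assumes "simple_graph G" "e \<in> edges G"
  obtains a b where "a \<noteq> b" "e = {a, b}" "a \<in> verts G" "b \<in> verts G"
  using assms unfolding simple_graph_def by (metis card_2_iff insert_subset)

lemma simple_graph_edge_at:
  assumes "simple_graph G" "e \<in> edges G" "v \<in> e"
  obtains w where "e = {v, w}" "v \<noteq> w"
proof -
  obtain a b where "a \<noteq> b" "e = {a, b}" using simple_graph_edgeE[OF assms(1,2)] .
  with assms(3) have "e = {v, if v = a then b else a}" "v \<noteq> (if v = a then b else a)" by auto
  then show ?thesis by (rule that)
qed

lemma degree_le_max_degree: "simple_graph G \<Longrightarrow> v \<in> verts G \<Longrightarrow> degree G v \<le> max_degree G"
  unfolding max_degree_def simple_graph_def by (intro Max_ge) auto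

lemma max_degree_attained:
  assumes "simple_graph G" "verts G \<noteq> {}"
  obtains v where "v \<in> verts G" "max_degree G \<le> degree G v"
proof -
  have "max_degree G \<in> insert 0 (degree G ` verts G)"
    unfolding max_degree_def using assms unfolding simple_graph_def by (intro Max_in) auto
  then show ?thesis
  proof
    assume "max_degree G = 0"
    moreover obtain v where "v \<in> verts G" using assms(2) by blast
    ultimately show ?thesis using that by simp
  next
    assume "max_degree G \<in> degree G ` verts G"
    then obtain v where "v \<in> verts G" "max_degree G = degree G v" by blast
    with that show ?thesis by simp
  qed
qed

lemma neighbours_subset_verts: "simple_graph G \<Longrightarrow> neighbours G v \<subseteq> verts G"
  unfolding simple_graph_def neighbours_def by blast

lemma card_neighbours_le_max_degree:
  assumes "simple_graph G" "v \<in> verts G"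
  shows "card (neighbours G v) \<le> max_degree G"
proof -
  have "inj_on (\<lambda>w. {v, w}) (neighbours G v)"
    by (auto intro!: inj_onI simp: doubleton_eq_iff)
  then have "card (neighbours G v) \<le> card {e \<in> edges G. v \<in> e}"
    using simple_graph_finite_edges[OF assms(1)]
    by (intro card_inj_on_le) (auto simp: neighbours_def)
  also have "\<dots> \<le> max_degree G"
    using degree_le_max_degree[OF assms] unfolding degree_def .
  finally show ?thesis .
qed

lemma inj_on_into_avoiding:
  assumes "finite A" "finite L" "card A + card L \<le> K"
  shows "\<exists>h :: 'a \<Rightarrow> nat. inj_on h A \<and> h ` A \<subseteq> {0..<K} - L"
proof -
  have "card A \<le> card ({0..<K} - L)"
    using diff_card_le_card_Diff[OF assms(2), of "{0..<K}"] assms(3) by simp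
  then show ?thesis using card_le_inj[OF assms(1), of "{0..<K} - L"] by auto
qed

lemma injection_avoiding_closed_neighbourhood:
  assumes "simple_graph H" "v \<in> verts H" "n + max_degree H + 1 \<le> K"
  shows "\<exists>h :: nat \<Rightarrow> nat.
    inj_on h {0..<n} \<and> h ` {0..<n} \<subseteq> {0..<K} - l ` insert v (neighbours H v)"
proof -
  have finite_N: "finite (neighbours H v)"
    using neighbours_subset_verts[OF assms(1)] assms(1)
    unfolding simple_graph_def by (blast intro: finite_subset)
  have "card (l ` insert v (neighbours H v)) \<le> card (insert v (neighbours H v))"
    using finite_N by (intro card_image_le) simp
  also have "\<dots> \<le> max_degree H + 1"
    using card_neighbours_le_max_degree[OF assms(1,2)] finite_N by (simp add: card_insert_if)
  finally have "card {0..<n} + card (l ` insert v (neighbours H v)) \<le> K" using assms(3) by simp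
  then show ?thesis by (rule inj_on_into_avoiding[rotated 2]) (use finite_N in auto)
qed

lemma incidence_chromatic_number_le:
  "incidence_coloring G k c \<Longrightarrow> incidence_chromatic_number G \<le> k"
  unfolding incidence_chromatic_number_def by (rule Least_le) blast

lemma incidence_coloring_less:
  "incidence_coloring G k c \<Longrightarrow> i \<in> incidences G \<Longrightarrow> c i < k"
  unfolding incidence_coloring_def by blast

lemma incidence_coloring_distinct:
  "incidence_coloring G k c \<Longrightarrow> i \<in> incidences G \<Longrightarrow> j \<in> incidences G \<Longrightarrow> i \<noteq> j \<Longrightarrow>
    adjacent_inc i j \<Longrightarrow> c i \<noteq> c j"
  unfolding incidence_coloring_def by blast

lemma adjacent_inc_sym: "adjacent_inc i j = adjacent_inc j i"
  unfolding adjacent_inc_def by (auto split: prod.splits simp: insert_commute)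

lemma incidence_cart_prodE:
  assumes "simple_graph G" "simple_graph H" "i \<in> incidences (cart_prod G H)"
  obtains (G_direction) u u' v where "i = ((u, v), {(u, v), (u', v)})"
      "(u, {u, u'}) \<in> incidences G" "u \<noteq> u'" "v \<in> verts H"
  | (H_direction) u v v' where "i = ((u, v), {(u, v), (u, v')})"
      "u \<in> verts G" "{v, v'} \<in> edges H" "v \<noteq> v'"
proof -
  obtain x e where i: "i = (x, e)" "e \<in> edges (cart_prod G H)" "x \<in> e"
    using assms(3) unfolding incidences_def by auto
  then consider (G) u u' v where "e = {(u, v), (u', v)}" "{u, u'} \<in> edges G" "v \<in> verts H"
    | (H) u v v' where "e = {(u, v), (u, v')}" "u \<in> verts G" "{v, v'} \<in> edges H"
    unfolding cart_prod_def edges_def by auto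
  then show ?thesis
  proof cases
    case G
    obtain a b where ab: "a \<noteq> b" "{u, u'} = {a, b}" "a \<in> verts G" "b \<in> verts G"
      using simple_graph_edgeE[OF assms(1) G(2)] by blast
    then have "(u, {u, u'}) \<in> incidences G" "(u', {u', u}) \<in> incidences G" "u \<noteq> u'"
      using G(2) unfolding incidences_def by (auto simp: doubleton_eq_iff insert_commute)
    moreover have "x = (u, v) \<or> x = (u', v)" using G(1) i(3) by blast
    ultimately show ?thesis
      using G i(1) G_direction[of u v u'] G_direction[of u' v u] by (auto simp: insert_commute)
  next
    case H
    obtain a b where ab: "a \<noteq> b" "{v, v'} = {a, b}"
      using simple_graph_edgeE[OF assms(2) H(3)] by blast
    then have "v \<noteq> v'" "{v', v} \<in> edges H" using H(3) by (auto simp: doubleton_eq_iff insert_commute)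
    moreover have "x = (u, v) \<or> x = (u, v')" using H(1) i(3) by blast
    ultimately show ?thesis
      using H i(1) H_direction[of u v v'] H_direction[of u v' v] by (auto simp: insert_commute)
  qed
qed

lemma incidences_cart_prod_empty:
  "verts G = {} \<or> verts H = {} \<Longrightarrow> incidences (cart_prod G H) = {}"
  unfolding incidences_def cart_prod_def verts_def by auto

lemma G_edge_in_cart_prod:
  "{u, u'} \<in> edges G \<Longrightarrow> v \<in> verts H \<Longrightarrow> {(u, v), (u', v)} \<in> edges (cart_prod G H)"
  unfolding cart_prod_def edges_def by auto

lemma H_edge_in_cart_prod:
  "u \<in> verts G \<Longrightarrow> {v, v'} \<in> edges H \<Longrightarrow> {(u, v), (u, v')} \<in> edges (cart_prod G H)"
  unfolding cart_prod_def edges_def by auto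

lemma finite_edges_cart_prod:
  assumes "simple_graph G" "simple_graph H"
  shows "finite (edges (cart_prod G H))"
proof (rule finite_subset)
  show "edges (cart_prod G H) \<subseteq> Pow (verts G \<times> verts H)"
    using assms unfolding cart_prod_def edges_def simple_graph_def by auto
  show "finite (Pow (verts G \<times> verts H))"
    using assms unfolding simple_graph_def by simp
qed

lemma degree_cart_prod_ge:
  assumes "simple_graph G" "simple_graph H" "u \<in> verts G" "v \<in> verts H"
  shows "degree G u + degree H v \<le> degree (cart_prod G H) (u, v)"
proof -
  let ?G_copy = "(\<lambda>e. (\<lambda>x. (x, v)) ` e) ` {e \<in> edges G. u \<in> e}"
  let ?H_copy = "(\<lambda>f. Pair u ` f) ` {f \<in> edges H. v \<in> f}"
  have card_G_copy: "card ?G_copy = degree G u"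
    unfolding degree_def by (rule card_image) (auto intro!: inj_onI)
  have card_H_copy: "card ?H_copy = degree H v"
    unfolding degree_def by (rule card_image) (auto intro!: inj_onI)
  have "\<not> fst ` X \<subseteq> {u}" if X: "X \<in> ?G_copy" for X
  proof -
    obtain e where "e \<in> edges G" "X = (\<lambda>x. (x, v)) ` e" using X by blast
    then have "card (fst ` X) = 2" using assms(1) by (simp add: image_image simple_graph_def)
    then show ?thesis using card_mono[of "{u}" "fst ` X"] by auto
  qed
  moreover have "fst ` X \<subseteq> {u}" if "X \<in> ?H_copy" for X
    using that by auto
  ultimately have disjoint: "?G_copy \<inter> ?H_copy = {}" by blast
  have "?G_copy \<union> ?H_copy \<subseteq> {e \<in> edges (cart_prod G H). (u, v) \<in> e}"
  proof safe
    fix e assume "e \<in> edges G" "u \<in> e"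
    then obtain u' where "e = {u, u'}" using simple_graph_edge_at[OF assms(1)] by blast
    then show "(\<lambda>x. (x, v)) ` e \<in> edges (cart_prod G H)"
      using G_edge_in_cart_prod[of u u' G v H] \<open>e \<in> edges G\<close> assms(4) by simp
  next
    fix f assume "f \<in> edges H" "v \<in> f"
    then obtain v' where "f = {v, v'}" using simple_graph_edge_at[OF assms(2)] by blast
    then show "Pair u ` f \<in> edges (cart_prod G H)"
      using H_edge_in_cart_prod[of u G v v' H] \<open>f \<in> edges H\<close> assms(3) by simp
  qed auto
  then have "card (?G_copy \<union> ?H_copy) \<le> degree (cart_prod G H) (u, v)"
    unfolding degree_def using finite_edges_cart_prod[OF assms(1,2)] by (intro card_mono) auto
  moreover have "card (?G_copy \<union> ?H_copy) = card ?G_copy + card ?H_copy"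
    using disjoint simple_graph_finite_edges[OF assms(1)] simple_graph_finite_edges[OF assms(2)]
    by (intro card_Un_disjoint) auto
  ultimately show ?thesis using card_G_copy card_H_copy by simp
qed

lemma max_degree_cart_prod_ge:
  assumes "simple_graph G" "simple_graph H" "verts G \<noteq> {}" "verts H \<noteq> {}"
  shows "max_degree G + max_degree H \<le> max_degree (cart_prod G H)"
proof -
  obtain u where u: "u \<in> verts G" "max_degree G \<le> degree G u"
    using max_degree_attained[OF assms(1,3)] .
  obtain v where v: "v \<in> verts H" "max_degree H \<le> degree H v"
    using max_degree_attained[OF assms(2,4)] .
  have "finite (verts (cart_prod G H))" "(u, v) \<in> verts (cart_prod G H)"
    using assms(1,2) u v unfolding simple_graph_def cart_prod_def verts_def by auto
  then have "degree (cart_prod G H) (u, v) \<le> max_degree (cart_prod G H)"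
    unfolding max_degree_def by (intro Max_ge) auto
  with degree_cart_prod_ge[OF assms(1,2) u(1) v(1)] u v show ?thesis by linarith
qed

definition cart_prod_coloring ::
  "('b \<Rightarrow> nat \<Rightarrow> nat) \<Rightarrow> ('a \<times> 'a set \<Rightarrow> nat) \<Rightarrow> ('b \<Rightarrow> nat) \<Rightarrow>
    ('a \<times> 'b) \<times> ('a \<times> 'b) set \<Rightarrow> nat" where
  "cart_prod_coloring g c l = (\<lambda>((u, v), e).
     if snd ` e = {v} then g v (c (u, fst ` e)) else l (the_elem (snd ` e - {v})))"

lemma cart_prod_coloring_G_direction [simp]:
  "cart_prod_coloring g c l ((u, v), {(u, v), (u', v)}) = g v (c (u, {u, u'}))"
  unfolding cart_prod_coloring_def by simp

lemma cart_prod_coloring_H_direction [simp]: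
  "v \<noteq> v' \<Longrightarrow> cart_prod_coloring g c l ((u, v), {(u, v), (u, v')}) = l v'"
  unfolding cart_prod_coloring_def by (auto simp: insert_Diff_if)

lemma adjacent_inc_G_G:
  "((u, v), {(u, v), (u', v)}) \<noteq> ((a, b), {(a, b), (a', b)}) \<Longrightarrow>
    adjacent_inc ((u, v), {(u, v), (u', v)}) ((a, b), {(a, b), (a', b)}) \<Longrightarrow>
    b = v \<and> (u, {u, u'}) \<noteq> (a, {a, a'}) \<and> adjacent_inc (u, {u, u'}) (a, {a, a'})"
  unfolding adjacent_inc_def by (auto simp: doubleton_eq_iff)

lemma adjacent_inc_G_H:
  "u \<noteq> u' \<Longrightarrow> b \<noteq> b' \<Longrightarrow> adjacent_inc ((u, v), {(u, v), (u', v)}) ((a, b), {(a, b), (a, b')}) \<Longrightarrow>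
    b = v \<or> b' = v"
  unfolding adjacent_inc_def by (auto simp: doubleton_eq_iff)

lemma adjacent_inc_H_H:
  "v \<noteq> v' \<Longrightarrow> b \<noteq> b' \<Longrightarrow> ((u, v), {(u, v), (u, v')}) \<noteq> ((a, b), {(a, b), (a, b')}) \<Longrightarrow>
    adjacent_inc ((u, v), {(u, v), (u, v')}) ((a, b), {(a, b), (a, b')}) \<Longrightarrow> v' \<noteq> b'"
  unfolding adjacent_inc_def by (auto simp: doubleton_eq_iff)

context
  fixes G :: "'a graph" and H :: "'b graph" and n K :: nat
    and c :: "'a \<times> 'a set \<Rightarrow> nat" and l :: "'b \<Rightarrow> nat" and g :: "'b \<Rightarrow> nat \<Rightarrow> nat"
  assumes simple: "simple_graph G" "simple_graph H"
    and coloring: "incidence_coloring G n c"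
    and l_inj: "inj_on l (verts H)" and l_range: "l ` verts H \<subseteq> {0..<K}"
    and g_inj: "\<And>v. v \<in> verts H \<Longrightarrow> inj_on (g v) {0..<n}"
    and g_range: "\<And>v. v \<in> verts H \<Longrightarrow> g v ` {0..<n} \<subseteq> {0..<K} - l ` insert v (neighbours H v)"
begin

lemma cart_prod_coloring_range:
  assumes "i \<in> incidences (cart_prod G H)"
  shows "cart_prod_coloring g c l i < K"
  using simple assms
proof (cases rule: incidence_cart_prodE)
  case (G_direction u u' v)
  then have "c (u, {u, u'}) \<in> {0..<n}" using incidence_coloring_less[OF coloring] by simp
  with G_direction g_range[of v] show ?thesis by (auto dest!: subsetD)
next
  case (H_direction u v v')
  then have "v' \<in> verts H" using simple(2) unfolding simple_graph_def by blast
  with H_direction l_range show ?thesis by auto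
qed

lemma G_direction_color_ne_H_direction_color:
  assumes "(u, {u, u'}) \<in> incidences G" "u \<noteq> u'" "v \<in> verts H"
    and "{b, b'} \<in> edges H" "b \<noteq> b'"
    and "adjacent_inc ((u, v), {(u, v), (u', v)}) ((a, b), {(a, b), (a, b')})"
  shows "g v (c (u, {u, u'})) \<noteq> l b'"
proof -
  have "c (u, {u, u'}) \<in> {0..<n}" using incidence_coloring_less[OF coloring assms(1)] by simp
  then have "g v (c (u, {u, u'})) \<notin> l ` insert v (neighbours H v)" using g_range[OF assms(3)] by blast
  moreover have "b' \<in> insert v (neighbours H v)"
    using adjacent_inc_G_H[OF assms(2,5,6)] assms(4) by (auto simp: neighbours_def)
  ultimately show ?thesis by blast
qed

lemma cart_prod_coloring_distinct:
  assumes i: "i \<in> incidences (cart_prod G H)" and j: "j \<in> incidences (cart_prod G H)"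
    and "i \<noteq> j" and adj: "adjacent_inc i j"
  shows "cart_prod_coloring g c l i \<noteq> cart_prod_coloring g c l j"
  using simple i
proof (cases rule: incidence_cart_prodE)
  case i_G: (G_direction u u' v)
  from simple j show ?thesis
  proof (cases rule: incidence_cart_prodE)
    case j_G: (G_direction a a' b)
    have "b = v" "(u, {u, u'}) \<noteq> (a, {a, a'})" "adjacent_inc (u, {u, u'}) (a, {a, a'})"
      using adjacent_inc_G_G[OF \<open>i \<noteq> j\<close>[unfolded i_G(1) j_G(1)] adj[unfolded i_G(1) j_G(1)]]
      by simp_all
    then have "c (u, {u, u'}) \<noteq> c (a, {a, a'})"
      using incidence_coloring_distinct[OF coloring i_G(2) j_G(2)] by blast
    moreover have "c (u, {u, u'}) \<in> {0..<n}" "c (a, {a, a'}) \<in> {0..<n}"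
      using incidence_coloring_less[OF coloring] i_G(2) j_G(2) by auto
    ultimately show ?thesis
      using inj_on_eq_iff[OF g_inj[OF i_G(4)]] by (simp add: i_G(1) j_G(1) \<open>b = v\<close>)
  next
    case j_H: (H_direction a b b')
    have "g v (c (u, {u, u'})) \<noteq> l b'"
      using G_direction_color_ne_H_direction_color[OF i_G(2-4) j_H(3-4)] adj[unfolded i_G(1) j_H(1)] .
    then show ?thesis by (simp add: i_G(1) j_H(1,4))
  qed
next
  case i_H: (H_direction u v v')
  from simple j show ?thesis
  proof (cases rule: incidence_cart_prodE)
    case j_G: (G_direction a a' b)
    have "adjacent_inc ((a, b), {(a, b), (a', b)}) ((u, v), {(u, v), (u, v')})"
      using adj adjacent_inc_sym unfolding i_H(1) j_G(1) by blast
    then have "g b (c (a, {a, a'})) \<noteq> l v'"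
      by (rule G_direction_color_ne_H_direction_color[OF j_G(2-4) i_H(3-4)])
    then show ?thesis by (simp add: i_H(1,4) j_G(1))
  next
    case j_H: (H_direction a b b')
    have "v' \<noteq> b'"
      using adjacent_inc_H_H[OF i_H(4) j_H(4) \<open>i \<noteq> j\<close>[unfolded i_H(1) j_H(1)] adj[unfolded i_H(1) j_H(1)]] .
    moreover have "v' \<in> verts H" "b' \<in> verts H"
      using simple(2) i_H(3) j_H(3) unfolding simple_graph_def by auto
    ultimately show ?thesis
      using inj_on_eq_iff[OF l_inj] by (simp add: i_H(1,4) j_H(1,4))
  qed
qed

lemma incidence_coloring_cart_prod: "incidence_coloring (cart_prod G H) K (cart_prod_coloring g c l)"
  unfolding incidence_coloring_def
  by (intro conjI ballI impI cart_prod_coloring_range cart_prod_coloring_distinct) auto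

end

theorem mainTheorem3:
  fixes G :: "'a graph" and H :: "'b graph"
  assumes "simple_graph G" and "simple_graph H"
    and "delta_plus_graph 1 G"
    and "max_degree G + 1 \<ge> card (verts H) - 1 - max_degree H"
  shows "incidence_chromatic_number (cart_prod G H) \<le> max_degree (cart_prod G H) + 2"
proof (cases "verts G = {} \<or> verts H = {}")
  case True
  then have "incidence_coloring (cart_prod G H) 0 (\<lambda>_. 0)"
    using incidences_cart_prod_empty[OF True] unfolding incidence_coloring_def by simp
  then show ?thesis using incidence_chromatic_number_le by fastforce
next
  case False
  let ?n = "max_degree G + 1" and ?K = "max_degree G + max_degree H + 2"
  obtain c where c: "incidence_coloring G ?n c"
    using assms(3) unfolding delta_plus_graph_def by blast
  have finite_H: "finite (verts H)" using assms(2) unfolding simple_graph_def by blast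
  obtain l where l: "bij_betw l (verts H) {0..<card (verts H)}"
    using ex_bij_betw_finite_nat[OF finite_H] by blast
  have l_range: "l ` verts H \<subseteq> {0..<?K}" using l assms(4) unfolding bij_betw_def by auto
  have "\<forall>v \<in> verts H. \<exists>h.
      inj_on h {0..<?n} \<and> h ` {0..<?n} \<subseteq> {0..<?K} - l ` insert v (neighbours H v)"
    using injection_avoiding_closed_neighbourhood[OF assms(2)] by simp
  then obtain g where "\<forall>v \<in> verts H.
      inj_on (g v) {0..<?n} \<and> g v ` {0..<?n} \<subseteq> {0..<?K} - l ` insert v (neighbours H v)"
    by (rule bchoice[THEN exE])
  then have "incidence_coloring (cart_prod G H) ?K (cart_prod_coloring g c l)"
    using assms(1,2) c bij_betw_imp_inj_on[OF l] l_range by (intro incidence_coloring_cart_prod) auto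
  then show ?thesis
    using incidence_chromatic_number_le max_degree_cart_prod_ge[OF assms(1,2)] False by fastforce
qed

end
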